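(* Let $\mathfrak S$ be a commutative semiring and let $\sigma_{\mathfrak S}$ be the set of all finitely generated proper ideals of $\mathfrak S$, endowed with the ideal topology. If $\sigma_{\mathfrak S}$ is quasi-compact, then $\sigma_{\mathfrak S}$ contains all maximal ideals of $\mathfrak S$ (i.e. every maximal ideal of $\mathfrak S$ is finitely generated).
   Context: A semiring $(\mathfrak S,+,0,\cdot,1)$ has $(\mathfrak S,+,0)$ a commutative monoid, $(\mathfrak S,\cdot,1)$ a monoid, $0r=r0=0$, and two-sided distributivity; all semirings are commutative. An ideal is a nonempty proper subset closed under addition and under multiplication by elements of $\mathfrak S$; maximal means not properly contained in another ideal. For an ideal $\mathfrak a$, $\mathfrak a^{\uparrow}=\{\mathfrak x\in\sigma_{\mathfrak S}\mid\mathfrak a\subseteq\mathfrak x\}$; the ideal topology on $\sigma_{\mathfrak S}$ has the sets $\mathfrak a^{\uparrow}$ ($\mathfrak a$ any ideal) as a subbasis of closed sets. Quasi-compact means every open cover has a finite subcover. *)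

theory Defs
  imports "HOL-Analysis.Analysis"
begin

text \<open>Commutative semirings: type class combination comm_semiring_0 + comm_monoid_mult
  (commutative additive monoid, commutative multiplicative monoid with 1, 0 absorbing,
  distributivity; 0 = 1 is not excluded).\<close>

definition sr_ideal :: "'a::{comm_semiring_0,comm_monoid_mult} set \<Rightarrow> bool" where
  "sr_ideal I \<longleftrightarrow> I \<noteq> {} \<and> I \<noteq> UNIV \<and>
     (\<forall>x\<in>I. \<forall>y\<in>I. x + y \<in> I) \<and> (\<forall>r. \<forall>x\<in>I. r * x \<in> I)"

definition sr_maximal_ideal :: "'a::{comm_semiring_0,comm_monoid_mult} set \<Rightarrow> bool" where
  "sr_maximal_ideal M \<longleftrightarrow> sr_ideal M \<and> \<not> (\<exists>J. sr_ideal J \<and> M \<subset> J)"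

definition sr_generated :: "'a::{comm_semiring_0,comm_monoid_mult} set \<Rightarrow> 'a set" where
  "sr_generated F = {(\<Sum>f\<in>F. c f * f) | c. True}"

definition sr_fin_gen :: "'a::{comm_semiring_0,comm_monoid_mult} set \<Rightarrow> bool" where
  "sr_fin_gen I \<longleftrightarrow> (\<exists>F. finite F \<and> I = sr_generated F)"

definition sigma_S :: "'a::{comm_semiring_0,comm_monoid_mult} set set" where
  "sigma_S = {I. sr_ideal I \<and> sr_fin_gen I}"

definition up_set :: "'a::{comm_semiring_0,comm_monoid_mult} set \<Rightarrow> 'a set set" where
  "up_set a = {x \<in> sigma_S. a \<subseteq> x}"

text \<open>Ideal topology: the sets up_set a (a any ideal) form a subbasis of closed sets;
  equivalently their complements in sigma_S (together with sigma_S itself, the empty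
  intersection) form a subbasis of open sets.\<close>
definition ideal_topology :: "'a::{comm_semiring_0,comm_monoid_mult} set topology" where
  "ideal_topology = topology_generated_by
     (insert sigma_S {sigma_S - up_set a | a. sr_ideal a})"

end

theory Submission
  imports Defs
begin

text \<open>Suppose a maximal ideal \<open>M\<close> is not finitely generated. For every finite \<open>F \<subseteq> M\<close>
  the ideal \<open>(F)\<close> is proper, so the complements of the sets \<open>(F)\<^sup>\<up>\<close> are open. They cover
  \<open>\<sigma>\<close>: a point of \<open>\<sigma>\<close> lying in every \<open>(F)\<^sup>\<up>\<close> contains \<open>M\<close>, hence equals \<open>M\<close> by
  maximality, which is impossible. Yet no finitely many of them cover \<open>\<sigma>\<close>, since the ideal
  generated by the union of finitely many such \<open>F\<close> is a point of \<open>\<sigma>\<close> lying in every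
  corresponding \<open>(F)\<^sup>\<up>\<close>.\<close>

lemma sr_ideal_zero:
  assumes "sr_ideal I"
  shows "0 \<in> I"
  using assms unfolding sr_ideal_def by (metis all_not_in_conv mult_zero_left)

lemma sr_generatedI: "(\<Sum>f\<in>F. c f * f) \<in> sr_generated F"
  unfolding sr_generated_def by blast

lemma sr_generated_add:
  assumes "x \<in> sr_generated F" "y \<in> sr_generated F"
  shows "x + y \<in> sr_generated F"
proof -
  obtain c d where "x = (\<Sum>f\<in>F. c f * f)" "y = (\<Sum>f\<in>F. d f * f)"
    using assms by (auto simp: sr_generated_def)
  then have "x + y = (\<Sum>f\<in>F. (c f + d f) * f)"
    by (simp add: sum.distrib distrib_right)
  then show ?thesis using sr_generatedI by metis
qed

lemma sr_generated_mult:
  assumes "x \<in> sr_generated F"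
  shows "r * x \<in> sr_generated F"
proof -
  obtain c where "x = (\<Sum>f\<in>F. c f * f)"
    using assms by (auto simp: sr_generated_def)
  then have "r * x = (\<Sum>f\<in>F. (r * c f) * f)"
    by (simp add: sum_distrib_left mult.assoc)
  then show ?thesis using sr_generatedI by metis
qed

lemma zero_in_sr_generated: "0 \<in> sr_generated F"
  using sr_generatedI[of "\<lambda>_. 0" F] by simp

lemma sr_generated_least:
  assumes "0 \<in> S" "\<And>x y. x \<in> S \<Longrightarrow> y \<in> S \<Longrightarrow> x + y \<in> S"
    "\<And>r x. x \<in> S \<Longrightarrow> r * x \<in> S" "F \<subseteq> S"
  shows "sr_generated F \<subseteq> S"
proof
  fix x assume "x \<in> sr_generated F"
  then obtain c where x: "x = (\<Sum>f\<in>F. c f * f)" by (auto simp: sr_generated_def)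
  have "(\<Sum>f\<in>G. c f * f) \<in> S" if "G \<subseteq> S" for G
    using that by (induction G rule: infinite_finite_induct) (simp_all add: assms(1-3))
  then show "x \<in> S" using x assms(4) by blast
qed

lemma sr_generated_subset:
  assumes "sr_ideal M" "F \<subseteq> M"
  shows "sr_generated F \<subseteq> M"
  using assms sr_ideal_zero[OF assms(1)] by (intro sr_generated_least) (auto simp: sr_ideal_def)

lemma sr_ideal_sr_generated:
  assumes "sr_ideal M" "F \<subseteq> M"
  shows "sr_ideal (sr_generated F)"
proof -
  have "sr_generated F \<noteq> UNIV"
    using sr_generated_subset[OF assms] assms(1) unfolding sr_ideal_def by blast
  then show ?thesis
    unfolding sr_ideal_def
    using zero_in_sr_generated sr_generated_add sr_generated_mult by blast
qed

lemma subset_sr_generated: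
  assumes "finite F"
  shows "F \<subseteq> sr_generated F"
proof
  fix x assume "x \<in> F"
  have "(\<Sum>f\<in>F. (if f = x then 1 else 0) * f) = (\<Sum>f\<in>F. if f = x then f else 0)"
    by (rule sum.cong) auto
  also have "\<dots> = x"
    using assms \<open>x \<in> F\<close> by simp
  finally have "(\<Sum>f\<in>F. (if f = x then 1 else 0) * f) = x" .
  then show "x \<in> sr_generated F" using sr_generatedI by metis
qed

lemma sr_generated_mono:
  assumes "F \<subseteq> G" "finite G"
  shows "sr_generated F \<subseteq> sr_generated G"
  using assms subset_sr_generated[OF assms(2)]
  by (intro sr_generated_least zero_in_sr_generated sr_generated_add sr_generated_mult) auto

lemma sr_generated_in_sigma_S:
  assumes "sr_ideal M" "F \<subseteq> M" "finite F"
  shows "sr_generated F \<in> sigma_S"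
  using assms sr_ideal_sr_generated unfolding sigma_S_def sr_fin_gen_def by blast

lemma topspace_ideal_topology: "topspace ideal_topology = sigma_S"
  unfolding ideal_topology_def by (auto simp: up_set_def)

lemma openin_ideal_topology_Diff_up_set:
  assumes "sr_ideal a"
  shows "openin ideal_topology (sigma_S - up_set a)"
  unfolding ideal_topology_def by (rule topology_generated_by_Basis) (use assms in blast)

lemma not_fin_gen_maximal_ideal_cover:
  fixes M :: "'a::{comm_semiring_0,comm_monoid_mult} set"
  assumes "sr_maximal_ideal M" "M \<notin> sigma_S"
  shows "sigma_S \<subseteq> (\<Union>F\<in>{F. finite F \<and> F \<subseteq> M}. sigma_S - up_set (sr_generated F))"
proof
  fix I :: "'a set" assume I: "I \<in> sigma_S"
  show "I \<in> (\<Union>F\<in>{F. finite F \<and> F \<subseteq> M}. sigma_S - up_set (sr_generated F))"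
  proof (rule ccontr)
    assume "\<not> ?thesis"
    then have "sr_generated {m} \<subseteq> I" if "m \<in> M" for m
      using that I unfolding up_set_def by blast
    then have "M \<subseteq> I"
      using subset_sr_generated[of "{_}"] by blast
    moreover have "sr_ideal I"
      using I by (simp add: sigma_S_def)
    ultimately have "M = I"
      using assms(1) unfolding sr_maximal_ideal_def by blast
    then show False
      using I assms(2) by simp
  qed
qed

lemma finite_up_set_complements_not_cover:
  assumes "sr_ideal M" "finite \<F>" "\<F> \<subseteq> {F. finite F \<and> F \<subseteq> M}"
  shows "\<not> sigma_S \<subseteq> (\<Union>F\<in>\<F>. sigma_S - up_set (sr_generated F))"
proof -
  have fin: "finite (\<Union>\<F>)" and "\<Union>\<F> \<subseteq> M"
    using assms(2,3) by auto
  then have in_sigma: "sr_generated (\<Union>\<F>) \<in> sigma_S"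
    by (rule sr_generated_in_sigma_S[OF assms(1), rotated])
  have "sr_generated (\<Union>\<F>) \<in> up_set (sr_generated F)" if "F \<in> \<F>" for F
  proof -
    have "sr_generated F \<subseteq> sr_generated (\<Union>\<F>)"
      using that fin by (intro sr_generated_mono) auto
    then show ?thesis
      using in_sigma by (simp add: up_set_def)
  qed
  with in_sigma show ?thesis
    by blast
qed

theorem proposition3p6:
  assumes "compact_space (ideal_topology :: 'a::{comm_semiring_0,comm_monoid_mult} set topology)"
  shows "\<forall>M::'a set. sr_maximal_ideal M \<longrightarrow> M \<in> sigma_S"
proof (intro allI impI)
  fix M :: "'a set"
  assume max: "sr_maximal_ideal M"
  then have "sr_ideal M"
    by (simp add: sr_maximal_ideal_def)
  show "M \<in> sigma_S"
  proof (rule ccontr)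
    assume "M \<notin> sigma_S"
    let ?fin_subsets = "{F. finite F \<and> F \<subseteq> M}"
    let ?U = "\<lambda>F. sigma_S - up_set (sr_generated F)"
    have opens: "openin ideal_topology U" if "U \<in> ?U ` ?fin_subsets" for U
      using that sr_ideal_sr_generated[OF \<open>sr_ideal M\<close>]
      by (auto intro: openin_ideal_topology_Diff_up_set)
    have covers: "topspace ideal_topology \<subseteq> \<Union>(?U ` ?fin_subsets)"
      unfolding topspace_ideal_topology
      by (rule not_fin_gen_maximal_ideal_cover[OF max \<open>M \<notin> sigma_S\<close>])
    have "\<exists>\<U>. finite \<U> \<and> \<U> \<subseteq> ?U ` ?fin_subsets \<and> topspace ideal_topology \<subseteq> \<Union>\<U>"
      using assms unfolding compact_space_def by (rule compactinD) (fact opens covers)+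
    then obtain \<U> where "finite \<U>" "\<U> \<subseteq> ?U ` ?fin_subsets" and sub_covers: "sigma_S \<subseteq> \<Union>\<U>"
      unfolding topspace_ideal_topology by (elim exE conjE)
    then obtain \<F> where "finite \<F>" "\<F> \<subseteq> ?fin_subsets" "\<U> = ?U ` \<F>"
      using finite_subset_image by meson
    with sub_covers finite_up_set_complements_not_cover[OF \<open>sr_ideal M\<close>]
    show False
      by metis
  qed
qed

end
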